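(* Let $A$ and $B$ be automata and let $(b,n)$ be a normed backward simulation from $A$ to $B$. Then (1) $[A,B]\in b$, i.e., every finite execution of $A$ is $b$-related to some finite execution of $B$; (2) if moreover $b$ is image-finite (i.e., $b[s]$ is finite for every $s\in\mathrm{states}(A)$), then $(A,B)\in b$, i.e., every execution of $A$ is $b$-related to some execution of $B$.
   Context: An automaton $A$ consists of a set $\mathrm{states}(A)$ of states, a nonempty set $\mathrm{start}(A)\subseteq\mathrm{states}(A)$ of start states, a set $\mathrm{acts}(A)$ of actions containing a distinguished internal action $\tau$, and a set $\mathrm{steps}(A)\subseteq\mathrm{states}(A)\times\mathrm{acts}(A)\times\mathrm{states}(A)$ of steps; write $s\xrightarrow{a}_A t$ for $(s,a,t)\in\mathrm{steps}(A)$. An execution fragment of $A$ is a finite or infinite alternating sequence $s_0a_1s_1a_2s_2\cdots$ of states and actions, beginning with a state and, if finite, ending with a state, such that $s_{i-1}\xrightarrow{a_i}_A s_i$ for all $i>0$; its index set $\mathrm{Index}(\alpha)$ is the set of indices $i$ of its states $s_i$. An execution is an execution fragment whose first state is a start state. For a relation $R$ write $R[s]=\{u\mid (s,u)\in R\}$. Execution correspondence: Let $R\subseteq\mathrm{states}(A)\times\mathrm{states}(B)$ and let $\alpha=s_0a_1s_1\cdots$ and $\alpha'=u_0b_1u_1\cdots$ be execution fragments of $A$ and $B$. An index relation over $R$ between $\alpha$ and $\alpha'$ is a relation $I\subseteq\mathrm{Index}(\alpha)\times\mathrm{Index}(\alpha')$ such that (1) $(i,j)\in I$ implies $(s_i,u_j)\in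 R$; (2) $(i,j)\in I$, $(i',j')\in I$ and $i<i'$ imply $j\le j'$; (3) every index of $\alpha$ is related by $I$ to some index of $\alpha'$ and every index of $\alpha'$ is related by $I$ to some index of $\alpha$; (4) if $(i,j),(i+1,j+1)\in I$ then $a_{i+1}=b_{j+1}$; if $(i,j),(i+1,j)\in I$ then $a_{i+1}=\tau$; if $(i,j),(i,j+1)\in I$ then $b_{j+1}=\tau$. The fragments $\alpha,\alpha'$ are $R$-related, written $(\alpha,\alpha')\in R$, if such an $I$ exists. Write $(A,B)\in R$ if every execution of $A$ is $R$-related to some execution of $B$, and $[A,B]\in R$ if every finite execution of $A$ is $R$-related to some finite execution of $B$. A normed backward simulation from $A$ to $B$ is a pair $(b,n)$ where $b\subseteq\mathrm{states}(A)\times\mathrm{states}(B)$ is total (every $s\in\mathrm{states}(A)$ has $b[s]\neq\emptyset$) and $n:(\mathrm{steps}(A)\cup\mathrm{start}(A))\times\mathrm{states}(B)\to S$ for some set $S$ with a well-founded strict order $<$, such that: (1) if $s\in\mathrm{start}(A)$ and $u\in b[s]$ then (a) $u\in\mathrm{start}(B)$, or (b) there is $v\in b[s]$ with $v\xrightarrow{\tau}_B u$ and $n(s,v)<n(s,u)$; (2) if $t\xrightarrow{a}_A s$ and $u\in b[s]$ then (a) $u\in b[t]$ and $a=\tau$, or (b) there is $v\in b[t]$ with $v\xrightarrow{a}_B u$, or (c) there is $v\in b[s]$ with $v\xrightarrow{\tau}_B u$ and $n(t\xrightarrow{a}s,v)<n(t\xrightarrow{a}s,u)$. *)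

theory Defs
  imports Main "HOL-Library.Extended_Nat"
begin

text \<open>Automata. The distinguished internal action tau is a global parameter
  (shared by all automata), passed explicitly to the predicates below.\<close>

record ('s, 'a) automaton =
  states :: "'s set"
  start :: "'s set"
  acts :: "'a set"
  steps :: "('s \<times> 'a \<times> 's) set"

definition is_automaton :: "'a \<Rightarrow> ('s, 'a) automaton \<Rightarrow> bool" where
  "is_automaton tau A \<longleftrightarrow>
     start A \<noteq> {} \<and> start A \<subseteq> states A \<and> tau \<in> acts A \<and>
     steps A \<subseteq> states A \<times> acts A \<times> states A"

text \<open>An execution fragment s0 a1 s1 a2 s2 ... is represented by its length
  (number of steps; infinity for infinite fragments), the state sequence
  fstate i = s_i and the action sequence faction i = a_i (faction 0 unused).
  Values beyond the length are irrelevant.\<close>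

record ('s, 'a) frag =
  flen :: enat
  fstate :: "nat \<Rightarrow> 's"
  faction :: "nat \<Rightarrow> 'a"

definition Index :: "('s, 'a) frag \<Rightarrow> nat set" where
  "Index \<alpha> = {i. enat i \<le> flen \<alpha>}"

definition is_frag :: "('s, 'a) automaton \<Rightarrow> ('s, 'a) frag \<Rightarrow> bool" where
  "is_frag A \<alpha> \<longleftrightarrow>
     (\<forall>i\<in>Index \<alpha>. fstate \<alpha> i \<in> states A) \<and>
     (\<forall>i. Suc i \<in> Index \<alpha> \<longrightarrow>
        (fstate \<alpha> i, faction \<alpha> (Suc i), fstate \<alpha> (Suc i)) \<in> steps A)"

definition is_exec :: "('s, 'a) automaton \<Rightarrow> ('s, 'a) frag \<Rightarrow> bool" where
  "is_exec A \<alpha> \<longleftrightarrow> is_frag A \<alpha> \<and> fstate \<alpha> 0 \<in> start A"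

definition is_finite_frag :: "('s, 'a) frag \<Rightarrow> bool" where
  "is_finite_frag \<alpha> \<longleftrightarrow> flen \<alpha> \<noteq> \<infinity>"

definition index_rel ::
  "'a \<Rightarrow> ('s \<times> 't) set \<Rightarrow> ('s, 'a) frag \<Rightarrow> ('t, 'a) frag \<Rightarrow> (nat \<times> nat) set \<Rightarrow> bool" where
  "index_rel tau R \<alpha> \<alpha>' I \<longleftrightarrow>
     I \<subseteq> Index \<alpha> \<times> Index \<alpha>' \<and>
     (\<forall>i j. (i, j) \<in> I \<longrightarrow> (fstate \<alpha> i, fstate \<alpha>' j) \<in> R) \<and>
     (\<forall>i j i' j'. (i, j) \<in> I \<longrightarrow> (i', j') \<in> I \<longrightarrow> i < i' \<longrightarrow> j \<le> j') \<and>
     (\<forall>i\<in>Index \<alpha>. \<exists>j. (i, j) \<in> I) \<and>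
     (\<forall>j\<in>Index \<alpha>'. \<exists>i. (i, j) \<in> I) \<and>
     (\<forall>i j. (i, j) \<in> I \<longrightarrow> (Suc i, Suc j) \<in> I \<longrightarrow> faction \<alpha> (Suc i) = faction \<alpha>' (Suc j)) \<and>
     (\<forall>i j. (i, j) \<in> I \<longrightarrow> (Suc i, j) \<in> I \<longrightarrow> faction \<alpha> (Suc i) = tau) \<and>
     (\<forall>i j. (i, j) \<in> I \<longrightarrow> (i, Suc j) \<in> I \<longrightarrow> faction \<alpha>' (Suc j) = tau)"

definition frag_related ::
  "'a \<Rightarrow> ('s \<times> 't) set \<Rightarrow> ('s, 'a) frag \<Rightarrow> ('t, 'a) frag \<Rightarrow> bool" where
  "frag_related tau R \<alpha> \<alpha>' \<longleftrightarrow> (\<exists>I. index_rel tau R \<alpha> \<alpha>' I)"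

definition exec_corr ::
  "'a \<Rightarrow> ('s \<times> 't) set \<Rightarrow> ('s, 'a) automaton \<Rightarrow> ('t, 'a) automaton \<Rightarrow> bool" where
  "exec_corr tau R A B \<longleftrightarrow>
     (\<forall>\<alpha>. is_exec A \<alpha> \<longrightarrow> (\<exists>\<alpha>'. is_exec B \<alpha>' \<and> frag_related tau R \<alpha> \<alpha>'))"

definition fin_exec_corr ::
  "'a \<Rightarrow> ('s \<times> 't) set \<Rightarrow> ('s, 'a) automaton \<Rightarrow> ('t, 'a) automaton \<Rightarrow> bool" where
  "fin_exec_corr tau R A B \<longleftrightarrow>
     (\<forall>\<alpha>. is_exec A \<alpha> \<and> is_finite_frag \<alpha> \<longrightarrow>
        (\<exists>\<alpha>'. is_exec B \<alpha>' \<and> is_finite_frag \<alpha>' \<and> frag_related tau R \<alpha> \<alpha>'))"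

text \<open>The norm n is defined on
  (steps(A) \<union> start(A)) \<times> states(B); the disjoint union is modelled by a sum type
  (Inl for steps, Inr for start states).\<close>

definition normed_backward_sim ::
  "'a \<Rightarrow> ('s, 'a) automaton \<Rightarrow> ('t, 'a) automaton \<Rightarrow> ('s \<times> 't) set
   \<Rightarrow> (('s \<times> 'a \<times> 's) + 's \<Rightarrow> 't \<Rightarrow> 'o) \<Rightarrow> ('o \<times> 'o) set \<Rightarrow> bool" where
  "normed_backward_sim tau A B b n lt \<longleftrightarrow>
     wf lt \<and> trans lt \<and>
     b \<subseteq> states A \<times> states B \<and>
     (\<forall>s\<in>states A. b `` {s} \<noteq> {}) \<and>
     (\<forall>s\<in>start A. \<forall>u\<in>b `` {s}.
        u \<in> start B \<or>
        (\<exists>v\<in>b `` {s}. (v, tau, u) \<in> steps B \<and> (n (Inr s) v, n (Inr s) u) \<in> lt)) \<and>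
     (\<forall>t a s. (t, a, s) \<in> steps A \<longrightarrow> (\<forall>u\<in>b `` {s}.
        (u \<in> b `` {t} \<and> a = tau) \<or>
        (\<exists>v\<in>b `` {t}. (v, a, u) \<in> steps B) \<or>
        (\<exists>v\<in>b `` {s}. (v, tau, u) \<in> steps B \<and>
           (n (Inl (t, a, s)) v, n (Inl (t, a, s)) u) \<in> lt)))"

definition image_finite :: "('s, 'a) automaton \<Rightarrow> ('s \<times> 't) set \<Rightarrow> bool" where
  "image_finite A b \<longleftrightarrow> (\<forall>s\<in>states A. finite (b `` {s}))"

end

theory Submission
  imports Defs
begin

(* Part (1) follows the execution s0 a1 s1 ... of A step by step, producing matching
   B-executions backwards through the simulation. Given a step t -a-> s of A and u in b[s],
   clause (2) of the simulation either lets u stutter, or reaches u by an a-step from some v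
   in b[t], or reaches u by a tau-step from some w in b[s] of smaller norm; by well-foundedness
   of the norm the last case bottoms out, so some v in b[t] can be extended to u by a
   B-fragment matching the step.
   Clause (1) of the simulation does the same for the start state.

   For part (2), the extension from v to u works for every B-execution ending in v, so the sets
   b[s_k] with these extension edges form a finitely branching layered graph in which every node
   has a predecessor. Koenig's lemma gives an infinite path u0 u1 ..., and the B-executions
   built along it extend one another; their limit is an execution of B related to the given
   infinite execution of A. *)

lemma finite_antimono_ex_all:
  fixes Q :: "'x \<Rightarrow> nat \<Rightarrow> bool"
  assumes "finite S" and ex: "\<And>d. \<exists>x\<in>S. Q x d"
    and antimono: "\<And>x d d'. Q x d \<Longrightarrow> d' \<le> d \<Longrightarrow> Q x d'"
  shows "\<exists>x\<in>S. \<forall>d. Q x d"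
proof (rule ccontr)
  assume "\<not> ?thesis"
  then obtain f where f: "\<And>x. x \<in> S \<Longrightarrow> \<not> Q x (f x)"
    by metis
  obtain x where "x \<in> S" "Q x (Max (f ` S))"
    using ex by blast
  moreover have "f x \<le> Max (f ` S)"
    using \<open>finite S\<close> \<open>x \<in> S\<close> by simp
  ultimately show False
    using f antimono by blast
qed

fun layered_path ::
  "(nat \<Rightarrow> 'x set) \<Rightarrow> (nat \<Rightarrow> 'x \<Rightarrow> 'x \<Rightarrow> bool) \<Rightarrow> nat \<Rightarrow> 'x \<Rightarrow> nat \<Rightarrow> bool" where
  "layered_path L E k v 0 \<longleftrightarrow> v \<in> L k"
| "layered_path L E k v (Suc d) \<longleftrightarrow> v \<in> L k \<and> (\<exists>u. E k v u \<and> layered_path L E (Suc k) u d)"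

lemma layered_path_in: "layered_path L E k v d \<Longrightarrow> v \<in> L k"
  by (cases d) auto

lemma layered_path_le: "layered_path L E k v d \<Longrightarrow> d' \<le> d \<Longrightarrow> layered_path L E k v d'"
proof (induction d arbitrary: k v d')
  case 0
  then show ?case by simp
next
  case (Suc d)
  then show ?case
    by (cases d') (auto simp: layered_path_in)
qed

lemma koenig_layered:
  assumes fin: "\<And>k. finite (L k)" and nonempty: "\<And>k. L k \<noteq> {}"
    and pred: "\<And>k u. u \<in> L (Suc k) \<Longrightarrow> \<exists>v\<in>L k. E k v u"
  shows "\<exists>p. \<forall>k. p k \<in> L k \<and> E k (p k) (p (Suc k))"
proof -
  have paths: "\<exists>v. layered_path L E k v d" for k d
  proof (induction d arbitrary: k)
    case 0
    then show ?case using nonempty by auto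
  next
    case (Suc d)
    then obtain u where "layered_path L E (Suc k) u d" by blast
    moreover obtain v where "v \<in> L k" "E k v u"
      using pred layered_path_in[OF calculation] by blast
    ultimately show ?case by auto
  qed
  let ?P = "\<lambda>k v. \<forall>d. layered_path L E k v d"
  have "\<exists>v\<in>L 0. ?P 0 v"
  proof (rule finite_antimono_ex_all[OF fin])
    show "\<exists>v\<in>L 0. layered_path L E 0 v d" for d
      using paths[of 0 d] layered_path_in[of L E 0] by blast
  next
    show "layered_path L E 0 v d'" if "layered_path L E 0 v d" "d' \<le> d" for v d d'
      using that by (rule layered_path_le)
  qed
  then have start: "\<exists>v. ?P 0 v" by blast
  have step: "\<exists>u. ?P (Suc k) u \<and> E k v u" if "?P k v" for k v
  proof -
    have "\<exists>u\<in>L (Suc k). \<forall>d. E k v u \<and> layered_path L E (Suc k) u d"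
    proof (rule finite_antimono_ex_all[OF fin])
      show "\<exists>u\<in>L (Suc k). E k v u \<and> layered_path L E (Suc k) u d" for d
        using that[rule_format, of "Suc d"] layered_path_in[of L E "Suc k"] by auto
    next
      show "E k v u \<and> layered_path L E (Suc k) u d'"
        if "E k v u \<and> layered_path L E (Suc k) u d" "d' \<le> d" for u d d'
        using that layered_path_le[of L E "Suc k" u d d'] by simp
    qed
    then show ?thesis by blast
  qed
  obtain p where "\<forall>k. ?P k (p k) \<and> E k (p k) (p (Suc k))"
    using dependent_nat_choice[of ?P "\<lambda>k v u. E k v u", OF start step] by blast
  then show ?thesis
    by (metis layered_path.simps(1))
qed

definition frag_prefix :: "('s, 'a) frag \<Rightarrow> nat \<Rightarrow> ('s, 'a) frag" where
  "frag_prefix \<alpha> k = \<alpha>\<lparr>flen := enat k\<rparr>"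

lemma frag_prefix_simps [simp]:
  "flen (frag_prefix \<alpha> k) = enat k" "fstate (frag_prefix \<alpha> k) = fstate \<alpha>"
  "faction (frag_prefix \<alpha> k) = faction \<alpha>"
  by (simp_all add: frag_prefix_def)

lemma Index_frag_prefix [simp]: "Index (frag_prefix \<alpha> k) = {..k}"
  by (auto simp: Index_def)

definition frag_agree :: "nat \<Rightarrow> ('s, 'a) frag \<Rightarrow> ('s, 'a) frag \<Rightarrow> bool" where
  "frag_agree m \<beta> \<beta>' \<longleftrightarrow> (\<forall>j\<le>m. fstate \<beta>' j = fstate \<beta> j \<and> faction \<beta>' j = faction \<beta> j)"

lemma frag_agree_trans:
  "frag_agree m \<beta>1 \<beta>2 \<Longrightarrow> frag_agree m' \<beta>2 \<beta>3 \<Longrightarrow> m \<le> m' \<Longrightarrow> frag_agree m \<beta>1 \<beta>3"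
  by (auto simp: frag_agree_def)

lemma is_exec_prefix_SucI:
  assumes "is_exec B (frag_prefix \<beta> m)"
    and "(fstate \<beta> m, faction \<beta> (Suc m), fstate \<beta> (Suc m)) \<in> steps B"
    and "fstate \<beta> (Suc m) \<in> states B"
  shows "is_exec B (frag_prefix \<beta> (Suc m))"
  using assms unfolding is_exec_def is_frag_def frag_prefix_simps Index_frag_prefix
  by (simp add: atMost_Suc le_Suc_eq)

lemma is_exec_prefix_agree:
  assumes "is_exec B (frag_prefix \<beta> m)" and "frag_agree m \<beta> \<beta>'"
  shows "is_exec B (frag_prefix \<beta>' m)"
  using assms unfolding is_exec_def is_frag_def frag_agree_def frag_prefix_simps Index_frag_prefix
  by (simp add: Suc_leD)

lemma index_rel_prefix_agree:
  assumes IR: "index_rel tau R \<alpha> (frag_prefix \<beta> m) I" and agree: "frag_agree m \<beta> \<beta>'"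
  shows "index_rel tau R \<alpha> (frag_prefix \<beta>' m) I"
proof -
  have "j \<le> m" if "(i, j) \<in> I" for i j
    using IR that unfolding index_rel_def by auto
  then show ?thesis
    using IR agree unfolding index_rel_def frag_agree_def frag_prefix_simps Index_frag_prefix
    by (smt (verit) Suc_leD)
qed

definition frag_snoc :: "('s, 'a) frag \<Rightarrow> nat \<Rightarrow> 'a \<Rightarrow> 's \<Rightarrow> ('s, 'a) frag" where
  "frag_snoc \<beta> m c u = \<beta>\<lparr>fstate := (fstate \<beta>)(Suc m := u), faction := (faction \<beta>)(Suc m := c)\<rparr>"

lemma frag_agree_snoc: "frag_agree m \<beta> (frag_snoc \<beta> m c u)"
  by (simp add: frag_agree_def frag_snoc_def)

lemma index_rel_insert_last:
  assumes IR: "index_rel tau R (frag_prefix \<alpha> k) (frag_prefix \<beta> m) I" and km: "(k, m) \<in> I"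
    and k': "k' = k \<or> k' = Suc k" and m': "m' = m \<or> m' = Suc m" and new: "(k', m') \<noteq> (k, m)"
    and R: "(fstate \<alpha> k', fstate \<beta> m') \<in> R"
    and act_both: "k' = Suc k \<Longrightarrow> m' = Suc m \<Longrightarrow> faction \<alpha> k' = faction \<beta> m'"
    and act_left: "m' = m \<Longrightarrow> faction \<alpha> k' = tau"
    and act_right: "k' = k \<Longrightarrow> faction \<beta> m' = tau"
  shows "index_rel tau R (frag_prefix \<alpha> k') (frag_prefix \<beta> m') (insert (k', m') I)"
proof -
  have bound: "i \<le> k \<and> j \<le> m" if "(i, j) \<in> I" for i j
    using IR that unfolding index_rel_def by auto
  have mono: "j \<le> j'" if "(i, j) \<in> I" "(i', j') \<in> I" "i < i'" for i j i' j'
    using IR that unfolding index_rel_def by blast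
  have act: "faction \<alpha> (Suc i) = faction \<beta> (Suc j)" if "(i, j) \<in> I" "(Suc i, Suc j) \<in> I" for i j
    using IR that unfolding index_rel_def by auto
  have act_l: "faction \<alpha> (Suc i) = tau" if "(i, j) \<in> I" "(Suc i, j) \<in> I" for i j
    using IR that unfolding index_rel_def by auto
  have act_r: "faction \<beta> (Suc j) = tau" if "(i, j) \<in> I" "(i, Suc j) \<in> I" for i j
    using IR that unfolding index_rel_def by auto
  have left: "\<exists>j. (i, j) \<in> I" if "i \<le> k" for i
    using IR that unfolding index_rel_def by auto
  have right: "\<exists>i. (i, j) \<in> I" if "j \<le> m" for j
    using IR that unfolding index_rel_def by auto
  have Rel: "(fstate \<alpha> i, fstate \<beta> j) \<in> R" if "(i, j) \<in> I" for i j
    using IR that unfolding index_rel_def by auto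
  show ?thesis
    unfolding index_rel_def frag_prefix_simps Index_frag_prefix
  proof (intro conjI allI impI ballI)
    show "insert (k', m') I \<subseteq> {..k'} \<times> {..m'}"
      using k' m' by (auto dest: bound)
  next
    fix i j assume "(i, j) \<in> insert (k', m') I"
    then show "(fstate \<alpha> i, fstate \<beta> j) \<in> R" using R Rel by auto
  next
    fix i j i' j' assume "(i, j) \<in> insert (k', m') I" "(i', j') \<in> insert (k', m') I" "i < i'"
    then show "j \<le> j'" using k' m' mono bound by fastforce
  next
    fix i assume "i \<in> {..k'}"
    then show "\<exists>j. (i, j) \<in> insert (k', m') I" using k' left by (auto simp: le_Suc_eq)
  next
    fix j assume "j \<in> {..m'}"
    then show "\<exists>i. (i, j) \<in> insert (k', m') I" using m' right by (auto simp: le_Suc_eq)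
  next
    fix i j assume ij: "(i, j) \<in> insert (k', m') I" and succ: "(Suc i, Suc j) \<in> insert (k', m') I"
    have "(i, j) \<in> I"
      using ij succ k' bound by fastforce
    show "faction \<alpha> (Suc i) = faction \<beta> (Suc j)"
    proof (cases "(Suc i, Suc j) = (k', m')")
      case True
      then consider "k' = Suc k" "m' = Suc m" | "k' = k" "m' = Suc m" | "k' = Suc k" "m' = m"
        using k' m' new by blast
      then show ?thesis
      proof cases
        case 1
        then show ?thesis using True act_both by simp
      next
        case 2
        then show ?thesis using True \<open>(i, j) \<in> I\<close> km act_l act_right by fastforce
      next
        case 3
        then show ?thesis using True \<open>(i, j) \<in> I\<close> km act_r act_left by fastforce
      qed
    next
      case False
      then show ?thesis using succ \<open>(i, j) \<in> I\<close> act by auto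
    qed
  next
    fix i j assume "(i, j) \<in> insert (k', m') I" "(Suc i, j) \<in> insert (k', m') I"
    then show "faction \<alpha> (Suc i) = tau"
      using k' m' new act_left act_l by (auto dest: bound)
  next
    fix i j assume "(i, j) \<in> insert (k', m') I" "(i, Suc j) \<in> insert (k', m') I"
    then show "faction \<beta> (Suc j) = tau"
      using k' m' new act_right act_r by (auto dest: bound)
  qed
qed

(* Only the part of beta up to m is looked at; extensions overwrite position Suc m. *)
definition prefix_corr ::
  "'a \<Rightarrow> ('s \<times> 't) set \<Rightarrow> ('t, 'a) automaton \<Rightarrow> ('s, 'a) frag \<Rightarrow> nat
   \<Rightarrow> ('t, 'a) frag \<Rightarrow> nat \<Rightarrow> (nat \<times> nat) set \<Rightarrow> bool" where
  "prefix_corr tau R B \<alpha> k \<beta> m I \<longleftrightarrow>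
     is_exec B (frag_prefix \<beta> m) \<and> (k, m) \<in> I \<and>
     index_rel tau R (frag_prefix \<alpha> k) (frag_prefix \<beta> m) I"

lemma prefix_corr_agree:
  "prefix_corr tau R B \<alpha> k \<beta> m I \<Longrightarrow> frag_agree m \<beta> \<beta>' \<Longrightarrow> prefix_corr tau R B \<alpha> k \<beta>' m I"
  unfolding prefix_corr_def using is_exec_prefix_agree index_rel_prefix_agree by metis

lemma prefix_corr_stutter:
  assumes "prefix_corr tau R B \<alpha> k \<beta> m I"
    and "faction \<alpha> (Suc k) = tau" and "(fstate \<alpha> (Suc k), fstate \<beta> m) \<in> R"
  shows "prefix_corr tau R B \<alpha> (Suc k) \<beta> m (insert (Suc k, m) I)"
  using assms index_rel_insert_last[of tau R \<alpha> k \<beta> m I "Suc k" m]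
  unfolding prefix_corr_def by simp

lemma prefix_corr_snoc:
  assumes corr: "prefix_corr tau R B \<alpha> k \<beta> m I"
    and step: "(fstate \<beta> m, c, u) \<in> steps B" and u: "u \<in> states B" and R: "(fstate \<alpha> k', u) \<in> R"
    and k': "k' = k \<and> c = tau \<or> k' = Suc k \<and> c = faction \<alpha> (Suc k)"
  shows "prefix_corr tau R B \<alpha> k' (frag_snoc \<beta> m c u) (Suc m) (insert (k', Suc m) I)"
proof -
  let ?\<beta>' = "frag_snoc \<beta> m c u"
  have "prefix_corr tau R B \<alpha> k ?\<beta>' m I"
    using corr frag_agree_snoc by (rule prefix_corr_agree)
  moreover have "is_exec B (frag_prefix ?\<beta>' (Suc m))"
    using calculation step u unfolding prefix_corr_def
    by (intro is_exec_prefix_SucI) (simp_all add: frag_snoc_def)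
  ultimately show ?thesis
    using R k' index_rel_insert_last[of tau R \<alpha> k ?\<beta>' m I k' "Suc m"]
    unfolding prefix_corr_def by (auto simp: frag_snoc_def)
qed

definition corr_reaches ::
  "'a \<Rightarrow> ('s \<times> 't) set \<Rightarrow> ('t, 'a) automaton \<Rightarrow> ('s, 'a) frag \<Rightarrow> nat \<Rightarrow> 't \<Rightarrow> bool" where
  "corr_reaches tau R B \<alpha> k u \<longleftrightarrow> (\<exists>\<beta> m I. prefix_corr tau R B \<alpha> k \<beta> m I \<and> fstate \<beta> m = u)"

definition corr_extends ::
  "'a \<Rightarrow> ('s \<times> 't) set \<Rightarrow> ('t, 'a) automaton \<Rightarrow> ('s, 'a) frag \<Rightarrow> nat \<Rightarrow> 't \<Rightarrow> 't \<Rightarrow> bool" where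
  "corr_extends tau R B \<alpha> k v u \<longleftrightarrow>
     (\<forall>\<beta> m I. prefix_corr tau R B \<alpha> k \<beta> m I \<and> fstate \<beta> m = v \<longrightarrow>
        (\<exists>\<beta>' m' I'. prefix_corr tau R B \<alpha> (Suc k) \<beta>' m' I' \<and> fstate \<beta>' m' = u \<and>
           m \<le> m' \<and> frag_agree m \<beta> \<beta>' \<and> I \<subseteq> I'))"

lemma corr_reaches_extends:
  "corr_reaches tau R B \<alpha> k v \<Longrightarrow> corr_extends tau R B \<alpha> k v u \<Longrightarrow> corr_reaches tau R B \<alpha> (Suc k) u"
  unfolding corr_reaches_def corr_extends_def by blast

lemma corr_reaches_tau:
  assumes "corr_reaches tau R B \<alpha> k w" and "(w, tau, u) \<in> steps B" and "u \<in> states B"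
    and "(fstate \<alpha> k, u) \<in> R"
  shows "corr_reaches tau R B \<alpha> k u"
  using assms prefix_corr_snoc[where k' = k and c = tau]
  unfolding corr_reaches_def by (fastforce simp: frag_snoc_def)

lemma corr_extends_stutter:
  assumes "faction \<alpha> (Suc k) = tau" and "(fstate \<alpha> (Suc k), v) \<in> R"
  shows "corr_extends tau R B \<alpha> k v v"
  using assms prefix_corr_stutter unfolding corr_extends_def
  by (fastforce simp: frag_agree_def)

lemma corr_extends_step:
  assumes "(v, faction \<alpha> (Suc k), u) \<in> steps B" and "u \<in> states B"
    and "(fstate \<alpha> (Suc k), u) \<in> R"
  shows "corr_extends tau R B \<alpha> k v u"
  unfolding corr_extends_def
proof (intro allI impI, elim conjE)
  fix \<beta> m I assume corr: "prefix_corr tau R B \<alpha> k \<beta> m I" and "fstate \<beta> m = v"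
  let ?\<beta>' = "frag_snoc \<beta> m (faction \<alpha> (Suc k)) u"
  have "prefix_corr tau R B \<alpha> (Suc k) ?\<beta>' (Suc m) (insert (Suc k, Suc m) I)"
    using prefix_corr_snoc[OF corr] assms \<open>fstate \<beta> m = v\<close> by simp
  then show "\<exists>\<beta>' m' I'. prefix_corr tau R B \<alpha> (Suc k) \<beta>' m' I' \<and> fstate \<beta>' m' = u \<and>
      m \<le> m' \<and> frag_agree m \<beta> \<beta>' \<and> I \<subseteq> I'"
    using frag_agree_snoc by (fastforce simp: frag_snoc_def)
qed

lemma corr_extends_tau:
  assumes ext: "corr_extends tau R B \<alpha> k v w" and step: "(w, tau, u) \<in> steps B"
    and u: "u \<in> states B" and R: "(fstate \<alpha> (Suc k), u) \<in> R"
  shows "corr_extends tau R B \<alpha> k v u"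
  unfolding corr_extends_def
proof (intro allI impI, elim conjE)
  fix \<beta> m I assume "prefix_corr tau R B \<alpha> k \<beta> m I" and "fstate \<beta> m = v"
  then obtain \<beta>' m' I' where corr': "prefix_corr tau R B \<alpha> (Suc k) \<beta>' m' I'"
    and last: "fstate \<beta>' m' = w" and le: "m \<le> m'" "frag_agree m \<beta> \<beta>'" "I \<subseteq> I'"
    using ext unfolding corr_extends_def by blast
  let ?\<beta>'' = "frag_snoc \<beta>' m' tau u"
  have "prefix_corr tau R B \<alpha> (Suc k) ?\<beta>'' (Suc m') (insert (Suc k, Suc m') I')"
    using prefix_corr_snoc[OF corr'] last step u R by simp
  moreover have "frag_agree m \<beta> ?\<beta>''"
    using frag_agree_trans[OF le(2) frag_agree_snoc le(1)] .
  ultimately show "\<exists>\<beta>' m' I'. prefix_corr tau R B \<alpha> (Suc k) \<beta>' m' I' \<and> fstate \<beta>' m' = u \<and>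
      m \<le> m' \<and> frag_agree m \<beta> \<beta>' \<and> I \<subseteq> I'"
    using le by (intro exI[of _ ?\<beta>''] exI[of _ "Suc m'"]) (auto simp: frag_snoc_def)
qed

lemma normed_backward_sim_corr_start:
  assumes sim: "normed_backward_sim tau A B b n lt" and start: "fstate \<alpha> 0 \<in> start A"
    and u: "u \<in> b `` {fstate \<alpha> 0}"
  shows "corr_reaches tau b B \<alpha> 0 u"
proof -
  define s where "s = fstate \<alpha> 0"
  have wf: "wf (inv_image lt (n (Inr s)))"
    using sim by (simp add: normed_backward_sim_def)
  show ?thesis
    using u unfolding s_def[symmetric]
  proof (induction u rule: wf_induct[OF wf])
    case (1 u)
    have "u \<in> states B"
      using sim "1.prems" unfolding normed_backward_sim_def by blast
    from sim start "1.prems" consider "u \<in> start B"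
      | w where "w \<in> b `` {s}" "(w, tau, u) \<in> steps B" "(n (Inr s) w, n (Inr s) u) \<in> lt"
      unfolding normed_backward_sim_def s_def by blast
    then show ?case
    proof cases
      case 1
      let ?\<beta> = "\<lparr>flen = 0, fstate = \<lambda>_. u, faction = \<lambda>_. tau\<rparr>"
      have "prefix_corr tau b B \<alpha> 0 ?\<beta> 0 {(0, 0)}"
        using 1 \<open>u \<in> states B\<close> \<open>u \<in> b `` {s}\<close>
        by (simp add: prefix_corr_def is_exec_def is_frag_def index_rel_def s_def)
      then show ?thesis
        unfolding corr_reaches_def by fastforce
    next
      case 2
      then show ?thesis
        using "1.IH" \<open>u \<in> states B\<close> \<open>u \<in> b `` {s}\<close> corr_reaches_tau unfolding s_def by fastforce
    qed
  qed
qed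

lemma normed_backward_sim_corr_extends:
  assumes sim: "normed_backward_sim tau A B b n lt"
    and step: "(fstate \<alpha> k, faction \<alpha> (Suc k), fstate \<alpha> (Suc k)) \<in> steps A"
    and u: "u \<in> b `` {fstate \<alpha> (Suc k)}"
  shows "\<exists>v \<in> b `` {fstate \<alpha> k}. corr_extends tau b B \<alpha> k v u"
proof -
  define e where "e = (fstate \<alpha> k, faction \<alpha> (Suc k), fstate \<alpha> (Suc k))"
  have wf: "wf (inv_image lt (n (Inl e)))"
    using sim by (simp add: normed_backward_sim_def)
  show ?thesis
    using u
  proof (induction u rule: wf_induct[OF wf])
    case (1 u)
    have "u \<in> states B"
      using sim "1.prems" unfolding normed_backward_sim_def by blast
    from sim step "1.prems" consider
        "u \<in> b `` {fstate \<alpha> k}" "faction \<alpha> (Suc k) = tau"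
      | v where "v \<in> b `` {fstate \<alpha> k}" "(v, faction \<alpha> (Suc k), u) \<in> steps B"
      | w where "w \<in> b `` {fstate \<alpha> (Suc k)}" "(w, tau, u) \<in> steps B"
          "(n (Inl e) w, n (Inl e) u) \<in> lt"
      unfolding normed_backward_sim_def e_def by blast
    then show ?case
    proof cases
      case 1
      then show ?thesis
        using "1.prems" corr_extends_stutter by fastforce
    next
      case 2
      then show ?thesis
        using "1.prems" \<open>u \<in> states B\<close> corr_extends_step by fastforce
    next
      case 3
      then show ?thesis
        using "1.IH" "1.prems" \<open>u \<in> states B\<close> corr_extends_tau by fastforce
    qed
  qed
qed

lemma normed_backward_sim_corr_reaches:
  assumes sim: "normed_backward_sim tau A B b n lt" and exec: "is_exec A \<alpha>"
    and k: "enat k \<le> flen \<alpha>" and u: "u \<in> b `` {fstate \<alpha> k}"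
  shows "corr_reaches tau b B \<alpha> k u"
  using k u
proof (induction k arbitrary: u)
  case 0
  then show ?case
    using normed_backward_sim_corr_start[OF sim] exec by (simp add: is_exec_def)
next
  case (Suc k)
  have "(fstate \<alpha> k, faction \<alpha> (Suc k), fstate \<alpha> (Suc k)) \<in> steps A"
    using exec Suc.prems(1) by (simp add: is_exec_def is_frag_def Index_def)
  then obtain v where "v \<in> b `` {fstate \<alpha> k}" "corr_extends tau b B \<alpha> k v u"
    using normed_backward_sim_corr_extends[OF sim] Suc.prems(2) by blast
  moreover have "enat k \<le> flen \<alpha>"
    using Suc.prems(1) by (simp add: Suc_ile_eq order_less_imp_le)
  ultimately show ?case
    using Suc.IH corr_reaches_extends by metis
qed

lemma normed_backward_sim_fin_exec_corr:
  assumes sim: "normed_backward_sim tau A B b n lt"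
  shows "fin_exec_corr tau b A B"
  unfolding fin_exec_corr_def
proof (intro allI impI, elim conjE)
  fix \<alpha> assume exec: "is_exec A \<alpha>" and "is_finite_frag \<alpha>"
  then obtain N where N: "flen \<alpha> = enat N"
    by (auto simp: is_finite_frag_def)
  have "fstate \<alpha> N \<in> states A"
    using exec N by (simp add: is_exec_def is_frag_def Index_def)
  then obtain u where "u \<in> b `` {fstate \<alpha> N}"
    using sim unfolding normed_backward_sim_def by blast
  then obtain \<beta> m I where "prefix_corr tau b B \<alpha> N \<beta> m I"
    using normed_backward_sim_corr_reaches[OF sim exec] N unfolding corr_reaches_def by fastforce
  moreover have "frag_prefix \<alpha> N = \<alpha>"
    using N by (simp add: frag_prefix_def)
  ultimately show "\<exists>\<alpha>'. is_exec B \<alpha>' \<and> is_finite_frag \<alpha>' \<and> frag_related tau b \<alpha> \<alpha>'"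
    unfolding prefix_corr_def frag_related_def is_finite_frag_def by force
qed

definition frag_lim :: "(nat \<Rightarrow> ('s, 'a) frag) \<Rightarrow> (nat \<Rightarrow> nat) \<Rightarrow> ('s, 'a) frag" where
  "frag_lim \<beta> m =
     \<lparr>flen = (SUP K. enat (m K)),
      fstate = (\<lambda>j. fstate (\<beta> (LEAST K. j \<le> m K)) j),
      faction = (\<lambda>j. faction (\<beta> (LEAST K. j \<le> m K)) j)\<rparr>"

lemma Index_frag_lim: "Index (frag_lim \<beta> m) = {j. \<exists>K. j \<le> m K}"
proof -
  have "enat j \<le> (SUP K. enat (m K)) \<longleftrightarrow> (\<exists>K. j \<le> m K)" for j
    by (cases j) (simp_all add: zero_enat_def[symmetric] Suc_ile_eq less_SUP_iff Suc_le_eq)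
  then show ?thesis
    by (simp add: Index_def frag_lim_def)
qed

lemma frag_agree_lim:
  assumes mono: "\<And>K. m K \<le> m (Suc K)" and agree: "\<And>K. frag_agree (m K) (\<beta> K) (\<beta> (Suc K))"
  shows "frag_agree (m K) (\<beta> K) (frag_lim \<beta> m)"
proof -
  have chain: "frag_agree (m K) (\<beta> K) (\<beta> K')" if "K \<le> K'" for K K'
    using that
  proof (induction K' rule: dec_induct)
    case base
    then show ?case by (simp add: frag_agree_def)
  next
    case (step K')
    then show ?case
      using frag_agree_trans agree lift_Suc_mono_le[of m, OF mono] by blast
  qed
  show ?thesis
    unfolding frag_agree_def
  proof (intro allI impI)
    fix j assume "j \<le> m K"
    define K0 where "K0 = (LEAST K. j \<le> m K)"
    have "j \<le> m K0" "K0 \<le> K"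
      using \<open>j \<le> m K\<close> unfolding K0_def by (auto intro: LeastI Least_le)
    then show "fstate (frag_lim \<beta> m) j = fstate (\<beta> K) j \<and> faction (frag_lim \<beta> m) j = faction (\<beta> K) j"
      using chain[of K0 K] by (simp add: frag_agree_def frag_lim_def flip: K0_def)
  qed
qed

lemma is_exec_of_prefixes:
  fixes m :: "nat \<Rightarrow> nat"
  assumes Index: "Index \<beta> = {j. \<exists>K. j \<le> m K}" and exec: "\<And>K. is_exec B (frag_prefix \<beta> (m K))"
  shows "is_exec B \<beta>"
  unfolding is_exec_def is_frag_def
proof (intro conjI ballI allI impI)
  show "fstate \<beta> 0 \<in> start B"
    using exec[of 0] by (simp add: is_exec_def)
next
  fix j assume "j \<in> Index \<beta>"
  then obtain K where "j \<le> m K" using Index by blast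
  then show "fstate \<beta> j \<in> states B"
    using exec[of K] by (simp add: is_exec_def is_frag_def)
next
  fix j assume "Suc j \<in> Index \<beta>"
  then obtain K where "Suc j \<le> m K" using Index by blast
  then show "(fstate \<beta> j, faction \<beta> (Suc j), fstate \<beta> (Suc j)) \<in> steps B"
    using exec[of K] by (simp add: is_exec_def is_frag_def)
qed

lemma index_rel_of_prefixes:
  fixes m :: "nat \<Rightarrow> nat"
  assumes inf: "flen \<alpha> = \<infinity>" and Index: "Index \<beta> = {j. \<exists>K. j \<le> m K}"
    and IR: "\<And>K. index_rel tau R (frag_prefix \<alpha> K) (frag_prefix \<beta> (m K)) (I K)"
    and mono: "\<And>K. I K \<subseteq> I (Suc K)"
  shows "index_rel tau R \<alpha> \<beta> (\<Union>K. I K)"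
proof -
  have common: "\<exists>K. p \<in> I K \<and> q \<in> I K"
    if pq: "p \<in> (\<Union>K. I K)" "q \<in> (\<Union>K. I K)" for p q
  proof -
    obtain K1 K2 where "p \<in> I K1" "q \<in> I K2"
      using pq by blast
    then have "p \<in> I (max K1 K2)" "q \<in> I (max K1 K2)"
      using lift_Suc_mono_le[of I, OF mono] by (meson max.cobounded1 max.cobounded2 subsetD)+
    then show ?thesis by blast
  qed
  note IR' = IR[unfolded index_rel_def frag_prefix_simps Index_frag_prefix]
  show ?thesis
    unfolding index_rel_def
  proof (intro conjI allI impI ballI)
    show "(\<Union>K. I K) \<subseteq> Index \<alpha> \<times> Index \<beta>"
      using IR' inf Index by (fastforce simp: Index_def)
  next
    fix i j assume "(i, j) \<in> (\<Union>K. I K)"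
    then show "(fstate \<alpha> i, fstate \<beta> j) \<in> R"
      using IR' by blast
  next
    fix i j i' j' assume "(i, j) \<in> (\<Union>K. I K)" "(i', j') \<in> (\<Union>K. I K)" "i < i'"
    then show "j \<le> j'"
      using common IR' by meson
  next
    fix i assume "i \<in> Index \<alpha>"
    obtain j where "(i, j) \<in> I i"
      using IR'[of i] by blast
    then show "\<exists>j. (i, j) \<in> (\<Union>K. I K)" by blast
  next
    fix j assume "j \<in> Index \<beta>"
    then obtain K where "j \<le> m K"
      using Index by blast
    then obtain i where "(i, j) \<in> I K"
      using IR'[of K] by blast
    then show "\<exists>i. (i, j) \<in> (\<Union>K. I K)" by blast
  next
    fix i j assume "(i, j) \<in> (\<Union>K. I K)" "(Suc i, Suc j) \<in> (\<Union>K. I K)"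
    then show "faction \<alpha> (Suc i) = faction \<beta> (Suc j)"
      using common IR' by meson
  next
    fix i j assume "(i, j) \<in> (\<Union>K. I K)" "(Suc i, j) \<in> (\<Union>K. I K)"
    then show "faction \<alpha> (Suc i) = tau"
      using common IR' by meson
  next
    fix i j assume "(i, j) \<in> (\<Union>K. I K)" "(i, Suc j) \<in> (\<Union>K. I K)"
    then show "faction \<beta> (Suc j) = tau"
      using common IR' by meson
  qed
qed

lemma frag_related_of_corr_chain:
  assumes corr: "\<And>K. prefix_corr tau R B \<alpha> K (\<beta> K) (m K) (I K)"
    and m_mono: "\<And>K. m K \<le> m (Suc K)" and agree: "\<And>K. frag_agree (m K) (\<beta> K) (\<beta> (Suc K))"
    and I_mono: "\<And>K. I K \<subseteq> I (Suc K)" and inf: "flen \<alpha> = \<infinity>"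
  shows "\<exists>\<alpha>'. is_exec B \<alpha>' \<and> frag_related tau R \<alpha> \<alpha>'"
proof -
  let ?lim = "frag_lim \<beta> m"
  have corr_lim: "prefix_corr tau R B \<alpha> K ?lim (m K) (I K)" for K
    using corr frag_agree_lim[of m \<beta>, OF m_mono agree] by (rule prefix_corr_agree)
  have "is_exec B ?lim"
    using corr_lim by (intro is_exec_of_prefixes[OF Index_frag_lim]) (simp add: prefix_corr_def)
  moreover have "index_rel tau R \<alpha> ?lim (\<Union>K. I K)"
    using corr_lim
    by (intro index_rel_of_prefixes[where m = m and I = I, OF inf Index_frag_lim _ I_mono])
      (simp add: prefix_corr_def)
  ultimately show ?thesis
    unfolding frag_related_def by blast
qed

lemma frag_related_of_corr_path:
  assumes start: "corr_reaches tau R B \<alpha> 0 (p 0)"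
    and ext: "\<And>k. corr_extends tau R B \<alpha> k (p k) (p (Suc k))" and inf: "flen \<alpha> = \<infinity>"
  shows "\<exists>\<alpha>'. is_exec B \<alpha>' \<and> frag_related tau R \<alpha> \<alpha>'"
proof -
  let ?P = "\<lambda>K (\<beta>, m, I). prefix_corr tau R B \<alpha> K \<beta> m I \<and> fstate \<beta> m = p K"
  let ?Q = "\<lambda>K (\<beta>, m, I) (\<beta>', m', I'). m \<le> m' \<and> frag_agree m \<beta> \<beta>' \<and> I \<subseteq> I'"
  have "\<exists>x. ?P 0 x"
    using start unfolding corr_reaches_def by auto
  moreover have "\<exists>y. ?P (Suc K) y \<and> ?Q K x y" if "?P K x" for K x
    using ext[of K] that unfolding corr_extends_def by (cases x) fastforce
  ultimately obtain c where c: "\<And>K. ?P K (c K) \<and> ?Q K (c K) (c (Suc K))"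
    using dependent_nat_choice[of ?P ?Q] by blast
  show ?thesis
  proof (rule frag_related_of_corr_chain[OF _ _ _ _ inf])
    show "prefix_corr tau R B \<alpha> K (fst (c K)) (fst (snd (c K))) (snd (snd (c K)))" for K
      using c[of K] by (simp add: split_beta)
    show "fst (snd (c K)) \<le> fst (snd (c (Suc K)))" for K
      using c[of K] by (simp add: split_beta)
    show "frag_agree (fst (snd (c K))) (fst (c K)) (fst (c (Suc K)))" for K
      using c[of K] by (simp add: split_beta)
    show "snd (snd (c K)) \<subseteq> snd (snd (c (Suc K)))" for K
      using c[of K] by (simp add: split_beta)
  qed
qed

lemma normed_backward_sim_corr_path:
  assumes sim: "normed_backward_sim tau A B b n lt" and imf: "image_finite A b"
    and exec: "is_exec A \<alpha>" and inf: "flen \<alpha> = \<infinity>"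
  shows "\<exists>p. \<forall>k. p k \<in> b `` {fstate \<alpha> k} \<and> corr_extends tau b B \<alpha> k (p k) (p (Suc k))"
proof (rule koenig_layered)
  have states: "fstate \<alpha> k \<in> states A" for k
    using exec inf by (simp add: is_exec_def is_frag_def Index_def)
  show "finite (b `` {fstate \<alpha> k})" for k
    using imf states unfolding image_finite_def by blast
  show "b `` {fstate \<alpha> k} \<noteq> {}" for k
    using sim states unfolding normed_backward_sim_def by blast
  have "(fstate \<alpha> k, faction \<alpha> (Suc k), fstate \<alpha> (Suc k)) \<in> steps A" for k
    using exec inf by (simp add: is_exec_def is_frag_def Index_def)
  then show "\<exists>v\<in>b `` {fstate \<alpha> k}. corr_extends tau b B \<alpha> k v u"
    if "u \<in> b `` {fstate \<alpha> (Suc k)}" for k u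
    using normed_backward_sim_corr_extends[OF sim _ that] by blast
qed

lemma normed_backward_sim_exec_corr:
  assumes sim: "normed_backward_sim tau A B b n lt" and imf: "image_finite A b"
  shows "exec_corr tau b A B"
  unfolding exec_corr_def
proof (intro allI impI)
  fix \<alpha> assume exec: "is_exec A \<alpha>"
  show "\<exists>\<alpha>'. is_exec B \<alpha>' \<and> frag_related tau b \<alpha> \<alpha>'"
  proof (cases "flen \<alpha> = \<infinity>")
    case False
    then show ?thesis
      using normed_backward_sim_fin_exec_corr[OF sim] exec
      unfolding fin_exec_corr_def is_finite_frag_def by blast
  next
    case True
    then obtain p where p: "\<And>k. p k \<in> b `` {fstate \<alpha> k}"
      "\<And>k. corr_extends tau b B \<alpha> k (p k) (p (Suc k))"
      using normed_backward_sim_corr_path[OF sim imf exec] by blast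
    have "corr_reaches tau b B \<alpha> 0 (p 0)"
      using normed_backward_sim_corr_reaches[OF sim exec _ p(1)] by (simp add: zero_enat_def[symmetric])
    then show ?thesis
      using frag_related_of_corr_path p(2) True by metis
  qed
qed

theorem mainTheorem2:
  fixes tau :: 'a
    and A :: "('s, 'a) automaton" and B :: "('t, 'a) automaton"
    and b :: "('s \<times> 't) set"
    and n :: "('s \<times> 'a \<times> 's) + 's \<Rightarrow> 't \<Rightarrow> 'o" and lt :: "('o \<times> 'o) set"
  assumes "is_automaton tau A" and "is_automaton tau B"
    and "normed_backward_sim tau A B b n lt"
  shows "fin_exec_corr tau b A B \<and> (image_finite A b \<longrightarrow> exec_corr tau b A B)"
  using normed_backward_sim_fin_exec_corr[OF assms(3)] normed_backward_sim_exec_corr[OF assms(3)]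
  by blast

end
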